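(* Let $\mathcal A_{\theta(P)}$ be a set of tuples $(P_1,\dots,P_k)$ each satisfying $\mathcal H_{\theta(P)}$, such that for each element the limits $R_T(x,P)$ and $H_T(x,P)$ are continuous and strictly increasing in $x$, and suppose $\sup_x|F_{T_n}(x,\hat P)-H_{T_n}(x,P)|\to0$ and $\sup_x|F_{T_n}(x,\hat P_\Pi)-R_{T_n}(x,\hat P)|\to0$ in probability for each element of $\mathcal A_{\theta(P)}$. For $\alpha\in(0,1)$ consider the permutation test $$\varphi_{F_n}(\alpha)=1[F_{T_n}\{T_n(Z),\hat P\}>R_{F_n}^{-1}(1-\alpha,\hat P)].$$ Then for each $(P_1,\dots,P_k)\in\mathcal A_{\theta(P)}$, $\lim_{n\to\infty}E\{\varphi_{F_n}(\alpha)\}=\alpha$.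
   Context: Setting: $P_1,\dots,P_k$ are distributions on $\mathbb R^{d_P}$; for each $i$, $X_{i1},\dots,X_{in_i}$ are i.i.d. $P_i$, samples jointly independent, $n=\sum n_i$ with $n_i/n\to p_i\in(0,1)$. $Z$ is the $n\times d_P$ matrix stacking the samples (sample $i$ occupying the row index block $\mathcal I_i$). For a permutation $\pi$ of $\{1,\dots,n\}$, $Z_\pi$ is $Z$ with $j$th row replaced by its $\pi(j)$th row, $Z_{\pi i}$ the rows of $Z_\pi$ indexed by $\mathcal I_i$, $\hat P_{\pi i}$ the empirical distribution of $Z_{\pi i}$, $\hat P_\pi=(\hat P_{\pi1},\dots,\hat P_{\pi k})$, $\hat P=\hat P_{\mathrm{id}}$. $\Pi$ is uniform over all $n!$ permutations and independent of $Z$. For a $d$-dimensional functional $\theta$, $\mathcal H_{\theta(P)}$ is the hypothesis $\theta_\ell(P_1)=\dots=\theta_\ell(P_k)$ for all $\ell$. $T_n$ is a real-valued statistic; $H_{T_n}(x,P)=\Pr\{T_n(Z)\le x\}$; $R_{T_n}(x,\hat P)=\frac1{n!}\sum_\pi1\{T_n(Z_\pi)\le x\}$. $H_T(x,P)$ is the limiting distribution function of $T_n(Z)$ and $R_T(x,P)$ the probability limit of $R_{T_n}(x,\hat P)$. $F_{T_n}(x,\hat P_\pi)$ is an estimated distribution function computed from $Z_\pi$. $R_{F_n}(x,\hat P)=\frac1{n!}\sum_\pi 1[F_{T_n}\{T_n(Z_\pi),\hat P_\pi\}\le x]$, and $R_{F_n}^{-1}(u,\hat P)=\inf\{x:R_{F_n}(x,\hat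 P)\ge u\}$. *)

theory Defs
  imports "HOL-Probability.Probability" "HOL-Combinatorics.Permutations"
begin

text \<open>Sample sizes: nn n i is the size n_i of sample i (i < k) when the total size is n.
  Rows of the data matrix are indexed by {..<n}; sample i occupies the consecutive block
  of rows {sum_(l<i) n_l ..< sum_(l<=i) n_l}. grp nn n j is the sample to which row j belongs.\<close>

definition grp :: "(nat \<Rightarrow> nat \<Rightarrow> nat) \<Rightarrow> nat \<Rightarrow> nat \<Rightarrow> nat" where
  "grp nn n j = (LEAST i. j < (\<Sum>l<Suc i. nn n l))"

definition data_law :: "(nat \<Rightarrow> 'a measure) \<Rightarrow> (nat \<Rightarrow> nat \<Rightarrow> nat) \<Rightarrow> nat \<Rightarrow> (nat \<Rightarrow> 'a) measure" where
  "data_law P nn n = PiM {..<n} (\<lambda>j. P (grp nn n j))"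

text \<open>Permutations of {..<n}; Z o pi is the matrix Z_pi (row j replaced by row pi j).\<close>

definition perms :: "nat \<Rightarrow> (nat \<Rightarrow> nat) set" where
  "perms n = {\<pi>. \<pi> permutes {..<n}}"

definition data_perm_law :: "(nat \<Rightarrow> 'a measure) \<Rightarrow> (nat \<Rightarrow> nat \<Rightarrow> nat) \<Rightarrow> nat \<Rightarrow> ((nat \<Rightarrow> 'a) \<times> (nat \<Rightarrow> nat)) measure" where
  "data_perm_law P nn n = data_law P nn n \<Otimes>\<^sub>M measure_pmf (pmf_of_set (perms n))"

definition H_Tn :: "(nat \<Rightarrow> 'a measure) \<Rightarrow> (nat \<Rightarrow> nat \<Rightarrow> nat) \<Rightarrow> (nat \<Rightarrow> (nat \<Rightarrow> 'a) \<Rightarrow> real) \<Rightarrow> nat \<Rightarrow> real \<Rightarrow> real" where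
  "H_Tn P nn T n x = measure (data_law P nn n) {Z \<in> space (data_law P nn n). T n Z \<le> x}"

definition R_Tn :: "(nat \<Rightarrow> (nat \<Rightarrow> 'a) \<Rightarrow> real) \<Rightarrow> nat \<Rightarrow> (nat \<Rightarrow> 'a) \<Rightarrow> real \<Rightarrow> real" where
  "R_Tn T n Z x = (\<Sum>\<pi>\<in>perms n. if T n (Z \<circ> \<pi>) \<le> x then 1 else 0) / fact n"

text \<open>R_{F_n}(x, hat P) = (1/n!) sum_pi 1[F_{T_n}{T_n(Z_pi), hat P_pi} <= x];
  F n Z x is the estimated distribution function F_{T_n}(x, .) computed from the data Z.\<close>

definition R_Fn :: "(nat \<Rightarrow> (nat \<Rightarrow> 'a) \<Rightarrow> real \<Rightarrow> real) \<Rightarrow> (nat \<Rightarrow> (nat \<Rightarrow> 'a) \<Rightarrow> real) \<Rightarrow> nat \<Rightarrow> (nat \<Rightarrow> 'a) \<Rightarrow> real \<Rightarrow> real" where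
  "R_Fn F T n Z x = (\<Sum>\<pi>\<in>perms n. if F n (Z \<circ> \<pi>) (T n (Z \<circ> \<pi>)) \<le> x then 1 else 0) / fact n"

definition R_Fn_inv :: "(nat \<Rightarrow> (nat \<Rightarrow> 'a) \<Rightarrow> real \<Rightarrow> real) \<Rightarrow> (nat \<Rightarrow> (nat \<Rightarrow> 'a) \<Rightarrow> real) \<Rightarrow> nat \<Rightarrow> (nat \<Rightarrow> 'a) \<Rightarrow> real \<Rightarrow> real" where
  "R_Fn_inv F T n Z u = Inf {x. R_Fn F T n Z x \<ge> u}"

definition phi_Fn :: "(nat \<Rightarrow> (nat \<Rightarrow> 'a) \<Rightarrow> real \<Rightarrow> real) \<Rightarrow> (nat \<Rightarrow> (nat \<Rightarrow> 'a) \<Rightarrow> real) \<Rightarrow> real \<Rightarrow> nat \<Rightarrow> (nat \<Rightarrow> 'a) \<Rightarrow> real" where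
  "phi_Fn F T \<alpha> n Z = (if F n Z (T n Z) > R_Fn_inv F T n Z (1 - \<alpha>) then 1 else 0)"

text \<open>Convergence in (outer) probability X_n -> c: for all eps, delta > 0, eventually there is an
  event of probability >= 1 - delta on which |X_n - c| <= eps.\<close>

definition conv_in_prob :: "(nat \<Rightarrow> 'b measure) \<Rightarrow> (nat \<Rightarrow> 'b \<Rightarrow> real) \<Rightarrow> real \<Rightarrow> bool" where
  "conv_in_prob M X c \<longleftrightarrow> (\<forall>\<epsilon>>0. \<forall>\<delta>>0. eventually (\<lambda>n. \<exists>A\<in>sets (M n).
      measure (M n) A \<ge> 1 - \<delta> \<and> (\<forall>\<omega>\<in>A. \<bar>X n \<omega> - c\<bar> \<le> \<epsilon>)) sequentially)"

definition sup_conv0_in_prob :: "(nat \<Rightarrow> 'b measure) \<Rightarrow> (nat \<Rightarrow> 'b \<Rightarrow> real \<Rightarrow> real) \<Rightarrow> bool" where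
  "sup_conv0_in_prob M G \<longleftrightarrow> (\<forall>\<epsilon>>0. \<forall>\<delta>>0. eventually (\<lambda>n. \<exists>A\<in>sets (M n).
      measure (M n) A \<ge> 1 - \<delta> \<and> (\<forall>\<omega>\<in>A. \<forall>x. \<bar>G n \<omega> x\<bar> \<le> \<epsilon>)) sequentially)"

definition cont_strict_cdf :: "(real \<Rightarrow> real) \<Rightarrow> bool" where
  "cont_strict_cdf G \<longleftrightarrow> continuous_on UNIV G \<and> strict_mono G \<and>
     (G \<longlongrightarrow> 0) at_bot \<and> (G \<longlongrightarrow> 1) at_top"

end

(* The test compares V = F_{T_n}(T_n(Z), hat P) with the (1 - alpha)-quantile of the permutation
   values V_pi = F_{T_n}(T_n(Z_pi), hat P_pi).  Uniform consistency of F for the permutation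
   distribution, combined with Markov's inequality over the uniform permutation, shows that with
   high probability all but a fraction eps of the V_pi lie within eps of R_{T_n}(T_n(Z_pi), hat P).
   These are probability integral transforms of the permutation distribution, so the quantile is
   1 - alpha up to O(eps).  Uniform consistency of F for H_{T_n} then shows that, outside an event
   of probability O(eps), the test rejects if H_{T_n}(T_n(Z)) > 1 - alpha + O(eps) and only if
   H_{T_n}(T_n(Z)) > 1 - alpha - O(eps); as H_{T_n} -> H_T, which is continuous with limits 0 and 1,
   both events have probability alpha + O(eps). *)

theory Submission
  imports Defs
begin

section \<open>Empirical distribution functions\<close>

definition ecdf :: "'i set \<Rightarrow> ('i \<Rightarrow> real) \<Rightarrow> real \<Rightarrow> real" where
  "ecdf I V x = card {i\<in>I. V i \<le> x} / card I"

lemma ecdf_mono: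
  assumes "finite I" "x \<le> y"
  shows "ecdf I V x \<le> ecdf I V y"
  unfolding ecdf_def using assms
  by (intro divide_right_mono of_nat_mono card_mono) auto

lemma ecdf_Max:
  assumes "finite I" "I \<noteq> {}"
  shows "ecdf I V (Max (V ` I)) = 1"
proof -
  have "{i\<in>I. V i \<le> Max (V ` I)} = I" using assms by auto
  then show ?thesis using assms by (simp add: ecdf_def)
qed

lemma ecdf_less_Min:
  assumes "finite I" "x < Min (V ` I)"
  shows "ecdf I V x = 0"
proof -
  have "\<forall>i\<in>I. Min (V ` I) \<le> V i" using assms(1) by simp
  then have "{i\<in>I. V i \<le> x} = {}" using assms(2) by force
  then show ?thesis unfolding ecdf_def by (metis card.empty div_0 of_nat_0)
qed

lemma Inf_ecdf_less_iff:
  assumes "finite I" "I \<noteq> {}" "0 < u" "u \<le> 1"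
  shows "Inf {x. u \<le> ecdf I V x} < v \<longleftrightarrow> (\<exists>x<v. u \<le> ecdf I V x)"
proof -
  have "Max (V ` I) \<in> {x. u \<le> ecdf I V x}" using assms ecdf_Max[OF assms(1,2)] by simp
  moreover have "bdd_below {x. u \<le> ecdf I V x}"
    by (rule bdd_belowI[of _ "Min (V ` I)"]) (use assms ecdf_less_Min in force)
  ultimately show ?thesis by (subst cInf_less_iff) auto
qed

lemma ex_less_ecdf_ge_iff:
  assumes "finite I" "I \<noteq> {}" "0 < u"
  shows "(\<exists>x<v. u \<le> ecdf I V x) \<longleftrightarrow> u * card I \<le> card {i\<in>I. V i < v}"
proof
  assume "\<exists>x<v. u \<le> ecdf I V x"
  then obtain x where "x < v" "u * card I \<le> card {i\<in>I. V i \<le> x}"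
    using assms by (auto simp: ecdf_def field_simps card_gt_0_iff)
  moreover have "card {i\<in>I. V i \<le> x} \<le> card {i\<in>I. V i < v}"
    using assms \<open>x < v\<close> by (intro card_mono) auto
  ultimately show "u * card I \<le> card {i\<in>I. V i < v}" by linarith
next
  define W where "W = {i\<in>I. V i < v}"
  assume le: "u * card I \<le> card W"
  have "0 < u * card I" using assms by (simp add: card_gt_0_iff)
  then have "W \<noteq> {}" using le by auto
  moreover have "finite W" using assms by (simp add: W_def)
  ultimately have "Max (V ` W) < v" and "W \<subseteq> {i\<in>I. V i \<le> Max (V ` W)}"
    by (auto simp: W_def)
  then have "Max (V ` W) < v" and "card W \<le> card {i\<in>I. V i \<le> Max (V ` W)}"
    using assms by (auto intro: card_mono)
  then show "\<exists>x<v. u \<le> ecdf I V x"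
    using le assms unfolding ecdf_def
    by (intro exI[of _ "Max (V ` W)"]) (auto simp: field_simps card_gt_0_iff)
qed

lemma ecdf_le_shift:
  fixes \<gamma> :: real
  assumes "finite I" "I \<noteq> {}" "card {i\<in>I. \<epsilon> < \<bar>V i - W i\<bar>} \<le> \<gamma> * card I"
  shows "ecdf I V x \<le> ecdf I W (x + \<epsilon>) + \<gamma>"
proof -
  have "{i\<in>I. V i \<le> x} \<subseteq> {i\<in>I. \<epsilon> < \<bar>V i - W i\<bar>} \<union> {i\<in>I. W i \<le> x + \<epsilon>}" by auto
  then have "card {i\<in>I. V i \<le> x} \<le> card ({i\<in>I. \<epsilon> < \<bar>V i - W i\<bar>} \<union> {i\<in>I. W i \<le> x + \<epsilon>})"
    using assms(1) by (intro card_mono) auto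
  also have "\<dots> \<le> card {i\<in>I. \<epsilon> < \<bar>V i - W i\<bar>} + card {i\<in>I. W i \<le> x + \<epsilon>}"
    by (rule card_Un_le)
  finally have "card {i\<in>I. V i \<le> x} \<le> \<gamma> * card I + card {i\<in>I. W i \<le> x + \<epsilon>}"
    using assms(3) by linarith
  moreover have "0 < card I" using assms(1,2) by (simp add: card_gt_0_iff)
  ultimately show ?thesis unfolding ecdf_def by (simp add: field_simps)
qed

lemma ecdf_comp_mono_le:
  assumes "finite I" "mono G" "c < G y"
  shows "ecdf I (G \<circ> U) c \<le> ecdf I U y"
proof -
  have "U i \<le> y" if "G (U i) \<le> c" for i
  proof (rule ccontr)
    assume "\<not> U i \<le> y"
    then have "G y \<le> G (U i)" using assms(2) by (simp add: monoD)
    then show False using that assms(3) by simp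
  qed
  then show ?thesis unfolding ecdf_def using assms(1)
    by (intro divide_right_mono of_nat_mono card_mono) auto
qed

lemma ecdf_le_comp_mono:
  assumes "finite I" "mono G"
  shows "ecdf I U y \<le> ecdf I (G \<circ> U) (G y)"
proof -
  have "G (U i) \<le> G y" if "U i \<le> y" for i using assms(2) that by (rule monoD)
  then show ?thesis unfolding ecdf_def using assms(1)
    by (intro divide_right_mono of_nat_mono card_mono) auto
qed

section \<open>The prepivoted permutation test\<close>

lemma finite_perms: "finite (perms n)"
  unfolding perms_def by (rule finite_permutations) simp

lemma perms_nonempty: "perms n \<noteq> {}"
  unfolding perms_def using permutes_id by blast

lemma card_perms: "card (perms n) = fact n"
  unfolding perms_def by (rule card_permutations) simp_all

lemma R_Tn_eq_ecdf: "R_Tn T n Z = ecdf (perms n) (\<lambda>\<pi>. T n (Z \<circ> \<pi>))"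
  by (rule ext) (simp add: R_Tn_def ecdf_def card_perms finite_perms sum.If_cases Int_def)

lemma R_Fn_eq_ecdf: "R_Fn F T n Z = ecdf (perms n) (\<lambda>\<pi>. F n (Z \<circ> \<pi>) (T n (Z \<circ> \<pi>)))"
  by (rule ext) (simp add: R_Fn_def ecdf_def card_perms finite_perms sum.If_cases Int_def)

lemma phi_Fn_eq_1_iff:
  assumes "0 < \<alpha>" "\<alpha> < 1"
  shows "phi_Fn F T \<alpha> n Z = 1 \<longleftrightarrow> (\<exists>x < F n Z (T n Z). 1 - \<alpha> \<le> R_Fn F T n Z x)"
  using assms Inf_ecdf_less_iff[OF finite_perms perms_nonempty, of "1 - \<alpha>"]
  by (auto simp: phi_Fn_def R_Fn_inv_def R_Fn_eq_ecdf)

lemma phi_Fn_eq_count: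
  assumes "0 < \<alpha>" "\<alpha> < 1"
  shows "phi_Fn F T \<alpha> n Z = (if (1 - \<alpha>) * fact n \<le>
      (\<Sum>\<pi>\<in>perms n. if F n (Z \<circ> \<pi>) (T n (Z \<circ> \<pi>)) < F n Z (T n Z) then 1 else 0) then 1 else 0)"
proof -
  have "phi_Fn F T \<alpha> n Z = 1 \<longleftrightarrow> (1 - \<alpha>) * fact n \<le>
      card {\<pi>\<in>perms n. F n (Z \<circ> \<pi>) (T n (Z \<circ> \<pi>)) < F n Z (T n Z)}"
    unfolding phi_Fn_eq_1_iff[OF assms] R_Fn_eq_ecdf
    using ex_less_ecdf_ge_iff[OF finite_perms perms_nonempty, of "1 - \<alpha>"] assms
    by (simp add: card_perms)
  then show ?thesis by (simp add: finite_perms sum.If_cases Int_def phi_Fn_def split: if_splits)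
qed

lemma measurable_comp_permutes:
  assumes "\<pi> permutes I"
  shows "(\<lambda>Z. Z \<circ> \<pi>) \<in> measurable (PiM I (\<lambda>_. M)) (PiM I (\<lambda>_. M))"
  unfolding comp_def
proof (rule measurable_PiM_single')
  show "(\<lambda>Z. Z (\<pi> i)) \<in> measurable (PiM I (\<lambda>_. M)) M" if "i \<in> I" for i
    using permutes_in_image[OF assms] that by simp
  show "(\<lambda>Z i. Z (\<pi> i)) \<in> space (PiM I (\<lambda>_. M)) \<rightarrow> (\<Pi>\<^sub>E i\<in>I. space M)"
    using assms by (auto simp: space_PiM PiE_def extensional_def permutes_in_image permutes_not_in)
qed

lemma borel_measurable_plug_in:
  assumes "T \<in> borel_measurable M" "(\<lambda>(Z, x). F Z x) \<in> borel_measurable (M \<Otimes>\<^sub>M borel)"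
  shows "(\<lambda>Z. F Z (T Z)) \<in> borel_measurable M"
  using measurable_compose[OF measurable_Pair[OF measurable_ident_sets[OF refl] assms(1)] assms(2)]
  by simp

lemma borel_measurable_phi_Fn:
  assumes "T n \<in> borel_measurable (PiM {..<n} (\<lambda>_. borel))"
    and "(\<lambda>(Z, x). F n Z x) \<in> borel_measurable (PiM {..<n} (\<lambda>_. borel) \<Otimes>\<^sub>M borel)"
    and "0 < \<alpha>" "\<alpha> < 1"
  shows "phi_Fn F T \<alpha> n \<in> borel_measurable (PiM {..<n} (\<lambda>_. borel))"
proof -
  note V0 = borel_measurable_plug_in[OF assms(1,2)]
  have "(\<lambda>Z. F n (Z \<circ> \<pi>) (T n (Z \<circ> \<pi>))) \<in> borel_measurable (PiM {..<n} (\<lambda>_. borel))"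
    if "\<pi> \<in> perms n" for \<pi>
    using measurable_compose[OF measurable_comp_permutes V0] that by (simp add: perms_def)
  then show ?thesis unfolding phi_Fn_eq_count[OF assms(3,4), abs_def] using V0 by measurable
qed

lemma card_prepivot_misfit_le:
  fixes \<gamma> :: real
  assumes "card {\<pi>\<in>perms n. \<exists>x. \<epsilon> < \<bar>F n (Z \<circ> \<pi>) x - R_Tn T n Z x\<bar>} \<le> \<gamma> * fact n"
  shows "card {\<pi>\<in>perms n. \<epsilon> < \<bar>F n (Z \<circ> \<pi>) (T n (Z \<circ> \<pi>)) - (R_Tn T n Z \<circ> (\<lambda>\<pi>. T n (Z \<circ> \<pi>))) \<pi>\<bar>}
      \<le> \<gamma> * card (perms n)"
proof -
  have "card {\<pi>\<in>perms n. \<epsilon> < \<bar>F n (Z \<circ> \<pi>) (T n (Z \<circ> \<pi>)) - R_Tn T n Z (T n (Z \<circ> \<pi>))\<bar>}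
      \<le> card {\<pi>\<in>perms n. \<exists>x. \<epsilon> < \<bar>F n (Z \<circ> \<pi>) x - R_Tn T n Z x\<bar>}"
    by (intro card_mono) (auto simp: finite_perms)
  then show ?thesis using assms by (simp add: card_perms)
qed

lemma phi_Fn_rejects_only_if:
  fixes \<gamma> :: real
  assumes "0 < \<alpha>" "\<alpha> < 1"
    and misfit: "card {\<pi>\<in>perms n. \<exists>x. \<epsilon> < \<bar>F n (Z \<circ> \<pi>) x - R_Tn T n Z x\<bar>} \<le> \<gamma> * fact n"
    and level: "R_Tn T n Z y + \<gamma> < 1 - \<alpha>"
    and "phi_Fn F T \<alpha> n Z = 1"
  shows "R_Tn T n Z y < F n Z (T n Z) + \<epsilon>"
proof -
  define U where "U = (\<lambda>\<pi>. T n (Z \<circ> \<pi>))"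
  define G where "G = R_Tn T n Z"
  have G: "G = ecdf (perms n) U" "mono G"
    unfolding G_def U_def R_Tn_eq_ecdf by (simp_all add: mono_def ecdf_mono finite_perms)
  obtain x where x: "x < F n Z (T n Z)" "1 - \<alpha> \<le> R_Fn F T n Z x"
    using assms(5) unfolding phi_Fn_eq_1_iff[OF assms(1,2)] by blast
  note x(2)
  also have "R_Fn F T n Z x \<le> ecdf (perms n) (G \<circ> U) (x + \<epsilon>) + \<gamma>"
    unfolding R_Fn_eq_ecdf G_def U_def
    using card_prepivot_misfit_le[where F=F and T=T and Z=Z, OF misfit]
    by (intro ecdf_le_shift finite_perms perms_nonempty)
  finally have "\<not> x + \<epsilon> < G y"
    using ecdf_comp_mono_le[OF finite_perms[of n] G(2), where c="x + \<epsilon>" and y=y and U=U]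
      level[folded G_def] unfolding G(1)[symmetric] by linarith
  then show ?thesis using x(1) unfolding G_def by linarith
qed

lemma phi_Fn_rejects_if:
  fixes \<gamma> :: real
  assumes "0 < \<alpha>" "\<alpha> < 1"
    and misfit: "card {\<pi>\<in>perms n. \<exists>x. \<epsilon> < \<bar>F n (Z \<circ> \<pi>) x - R_Tn T n Z x\<bar>} \<le> \<gamma> * fact n"
    and level: "1 - \<alpha> + \<gamma> \<le> R_Tn T n Z y"
    and "R_Tn T n Z y + \<epsilon> < F n Z (T n Z)"
  shows "phi_Fn F T \<alpha> n Z = 1"
proof -
  define U where "U = (\<lambda>\<pi>. T n (Z \<circ> \<pi>))"
  define G where "G = R_Tn T n Z"
  have G: "G = ecdf (perms n) U" "mono G"
    unfolding G_def U_def R_Tn_eq_ecdf by (simp_all add: mono_def ecdf_mono finite_perms)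
  have "1 - \<alpha> + \<gamma> \<le> ecdf (perms n) U y" using level unfolding G_def U_def R_Tn_eq_ecdf .
  also have "\<dots> \<le> ecdf (perms n) (G \<circ> U) (G y)"
    using G(2) by (rule ecdf_le_comp_mono[OF finite_perms])
  also have "\<dots> \<le> R_Fn F T n Z (G y + \<epsilon>) + \<gamma>"
    unfolding R_Fn_eq_ecdf G_def U_def
    using card_prepivot_misfit_le[where F=F and T=T and Z=Z, OF misfit]
    by (intro ecdf_le_shift finite_perms perms_nonempty) (simp_all add: abs_minus_commute)
  finally have "1 - \<alpha> \<le> R_Fn F T n Z (G y + \<epsilon>)" by simp
  then show ?thesis unfolding phi_Fn_eq_1_iff[OF assms(1,2)] using assms(5) unfolding G_def by blast
qed

text \<open>The margins around 1 - \<alpha> absorb the three errors of size \<epsilon>: F against H, F on permuted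
  samples against R_Tn, and the fraction of permutations where the latter fails.\<close>

lemma phi_Fn_on_good_sample:
  fixes H :: "real \<Rightarrow> real" and \<epsilon> :: real
  assumes "0 < \<alpha>" "\<alpha> < 1" "0 < \<epsilon>" "mono H"
    and fit_H: "\<forall>x. \<bar>F n Z x - H x\<bar> \<le> \<epsilon>"
    and fit_R: "\<bar>R_Tn T n Z y\<^sub>1 - (1 - \<alpha> - 3 * \<epsilon>)\<bar> \<le> \<epsilon>" "\<bar>R_Tn T n Z y\<^sub>3 - (1 - \<alpha> + 2 * \<epsilon>)\<bar> \<le> \<epsilon>"
    and misfit: "card {\<pi>\<in>perms n. \<exists>x. \<epsilon> < \<bar>F n (Z \<circ> \<pi>) x - R_Tn T n Z x\<bar>} \<le> \<epsilon> * fact n"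
    and levels: "H y\<^sub>2 < 1 - \<alpha> - 6 * \<epsilon>" "1 - \<alpha> + 5 * \<epsilon> < H y\<^sub>4"
  shows "phi_Fn F T \<alpha> n Z = 1 \<Longrightarrow> y\<^sub>2 < T n Z"
    and "y\<^sub>4 < T n Z \<Longrightarrow> phi_Fn F T \<alpha> n Z = 1"
proof -
  have fit: "\<bar>F n Z (T n Z) - H (T n Z)\<bar> \<le> \<epsilon>" using fit_H by blast
  show "y\<^sub>2 < T n Z" if "phi_Fn F T \<alpha> n Z = 1"
  proof (rule ccontr)
    assume "\<not> y\<^sub>2 < T n Z"
    then have "H (T n Z) \<le> H y\<^sub>2" using assms(4) by (simp add: monoD)
    moreover have "R_Tn T n Z y\<^sub>1 < F n Z (T n Z) + \<epsilon>"
      using phi_Fn_rejects_only_if[where F=F and T=T and Z=Z and y="y\<^sub>1", OF assms(1,2) misfit _ that]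
        fit_R(1) assms(3) by linarith
    ultimately show False using fit fit_R(1) levels(1) by linarith
  qed
  show "phi_Fn F T \<alpha> n Z = 1" if "y\<^sub>4 < T n Z"
  proof -
    have "H y\<^sub>4 \<le> H (T n Z)" using that assms(4) by (simp add: monoD)
    then show ?thesis
      using phi_Fn_rejects_if[where F=F and T=T and Z=Z and y="y\<^sub>3", OF assms(1,2) misfit]
        fit fit_R(2) levels(2) by linarith
  qed
qed

section \<open>Events of high probability\<close>

lemma cont_strict_cdf_attains:
  assumes "cont_strict_cdf G" "0 < c" "c < 1"
  shows "\<exists>y. G y = c"
proof -
  have cont: "continuous_on UNIV G" and "(G \<longlongrightarrow> 0) at_bot" "(G \<longlongrightarrow> 1) at_top"
    using assms(1) unfolding cont_strict_cdf_def by auto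
  then obtain a b where "\<forall>x\<le>a. G x < c" "\<forall>x\<ge>b. c < G x"
    using order_tendstoD[of G 0 at_bot c] order_tendstoD[of G 1 at_top c] assms(2,3)
    by (auto simp: eventually_at_bot_linorder eventually_at_top_linorder)
  then have "G a \<le> c" "c \<le> G (max a b)" "a \<le> max a b"
    by (auto intro: less_imp_le)
  then show ?thesis
    using IVT'[of G a c "max a b"] continuous_on_subset[OF cont] by blast
qed

lemma (in pair_prob_space) measure_pair_measure_eq_integral:
  assumes "C \<in> sets (M1 \<Otimes>\<^sub>M M2)"
  shows "integrable M1 (\<lambda>x. measure M2 (Pair x -` C))"
    and "measure (M1 \<Otimes>\<^sub>M M2) C = (\<integral>x. measure M2 (Pair x -` C) \<partial>M1)"
proof -
  have meas: "(\<lambda>x. measure M2 (Pair x -` C)) \<in> borel_measurable M1"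
    unfolding measure_def using M2.measurable_emeasure_Pair[OF assms] by measurable
  then show int: "integrable M1 (\<lambda>x. measure M2 (Pair x -` C))"
    by (intro M1.integrable_const_bound[where B=1]) auto
  have "ennreal (measure (M1 \<Otimes>\<^sub>M M2) C) = (\<integral>\<^sup>+x. ennreal (measure M2 (Pair x -` C)) \<partial>M1)"
    using M2.emeasure_pair_measure_alt[OF assms]
    by (simp add: P.emeasure_eq_measure M2.emeasure_eq_measure)
  also have "\<dots> = ennreal (\<integral>x. measure M2 (Pair x -` C) \<partial>M1)"
    using int by (intro nn_integral_eq_integral) auto
  finally show "measure (M1 \<Otimes>\<^sub>M M2) C = (\<integral>x. measure M2 (Pair x -` C) \<partial>M1)"
    by (simp add: Bochner_Integration.integral_nonneg)
qed

lemma Markov_uniform_sections: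
  fixes \<gamma> :: real
  assumes "prob_space M" "finite I" "I \<noteq> {}" "0 < \<gamma>"
    and A: "A \<in> sets (M \<Otimes>\<^sub>M measure_pmf (pmf_of_set I))"
      "1 - \<delta> \<le> measure (M \<Otimes>\<^sub>M measure_pmf (pmf_of_set I)) A"
  shows "\<exists>B\<in>sets M. 1 - \<delta> / \<gamma> \<le> measure M B \<and> (\<forall>Z\<in>B. card {i\<in>I. (Z, i) \<notin> A} \<le> \<gamma> * card I)"
proof -
  interpret M: prob_space M by fact
  define K where "K = measure_pmf (pmf_of_set I)"
  interpret MK: pair_prob_space M K unfolding K_def by unfold_locales
  define C where "C = space (M \<Otimes>\<^sub>M K) - A"
  txt \<open>g Z is the fraction of permutations i with (Z, i) outside A; by Fubini its mean is at
    most \<delta>, and Markov's inequality bounds the probability that it reaches \<gamma>.\<close>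
  define g where "g = (\<lambda>Z. measure K (Pair Z -` C))"
  define B where "B = space M - {Z\<in>space M. \<gamma> \<le> g Z}"
  have C: "C \<in> sets (M \<Otimes>\<^sub>M K)" using A(1) unfolding C_def K_def by auto
  note g_int = MK.measure_pair_measure_eq_integral(1)[OF C, folded g_def]
  have "integral\<^sup>L M g = measure (M \<Otimes>\<^sub>M K) C"
    using MK.measure_pair_measure_eq_integral(2)[OF C, folded g_def] by simp
  also have "\<dots> \<le> \<delta>"
    using MK.P.prob_compl[OF A(1)[folded K_def]] A(2) unfolding C_def K_def by simp
  finally have "integral\<^sup>L M g \<le> \<delta>" .
  have "measure M {Z\<in>space M. \<gamma> \<le> g Z} \<le> integral\<^sup>L M g / \<gamma>"
    by (rule integral_Markov_inequality_measure[OF g_int sets.top _ assms(4)]) (simp add: g_def)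
  also have "\<dots> \<le> \<delta> / \<gamma>"
    using \<open>integral\<^sup>L M g \<le> \<delta>\<close> assms(4) by (simp add: divide_right_mono)
  finally have "measure M {Z\<in>space M. \<gamma> \<le> g Z} \<le> \<delta> / \<gamma>" .
  moreover have g_ge: "{Z\<in>space M. \<gamma> \<le> g Z} \<in> sets M" using g_int by measurable
  ultimately have "B \<in> sets M" "1 - \<delta> / \<gamma> \<le> measure M B"
    unfolding B_def by (auto simp: M.prob_compl)
  moreover have "card {i\<in>I. (Z, i) \<notin> A} \<le> \<gamma> * card I" if "Z \<in> B" for Z
  proof -
    have "Pair Z -` C = {i. (Z, i) \<notin> A}"
      using that by (auto simp: B_def C_def K_def space_pair_measure)
    then have "g Z = measure K {i. (Z, i) \<notin> A}" unfolding g_def by simp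
    also have "\<dots> = card {i\<in>I. (Z, i) \<notin> A} / card I"
      using measure_pmf_of_set[OF assms(3,2)] by (simp add: K_def Int_def)
    finally have "card {i\<in>I. (Z, i) \<notin> A} / card I < \<gamma>" using that by (auto simp: B_def)
    then show ?thesis using assms(2,3) by (simp add: divide_less_eq card_gt_0_iff)
  qed
  ultimately show ?thesis by blast
qed

definition eventually_whp :: "(nat \<Rightarrow> 'b measure) \<Rightarrow> real \<Rightarrow> (nat \<Rightarrow> 'b \<Rightarrow> bool) \<Rightarrow> bool" where
  "eventually_whp M \<delta> Q \<longleftrightarrow>
    (\<forall>\<^sub>F n in sequentially. \<exists>A\<in>sets (M n). 1 - \<delta> \<le> measure (M n) A \<and> (\<forall>\<omega>\<in>A. Q n \<omega>))"

lemma conv_in_prob_whp: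
  "conv_in_prob M X c \<Longrightarrow> 0 < \<epsilon> \<Longrightarrow> 0 < \<delta> \<Longrightarrow> eventually_whp M \<delta> (\<lambda>n \<omega>. \<bar>X n \<omega> - c\<bar> \<le> \<epsilon>)"
  unfolding conv_in_prob_def eventually_whp_def by blast

lemma sup_conv0_in_prob_whp:
  "sup_conv0_in_prob M G \<Longrightarrow> 0 < \<epsilon> \<Longrightarrow> 0 < \<delta> \<Longrightarrow> eventually_whp M \<delta> (\<lambda>n \<omega>. \<forall>x. \<bar>G n \<omega> x\<bar> \<le> \<epsilon>)"
  unfolding sup_conv0_in_prob_def eventually_whp_def by blast

lemma eventually_whp_mono:
  assumes "eventually_whp M \<delta> P" "\<delta> \<le> \<delta>'" "\<And>n \<omega>. P n \<omega> \<Longrightarrow> Q n \<omega>"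
  shows "eventually_whp M \<delta>' Q"
  using assms(1) unfolding eventually_whp_def
proof (rule eventually_mono)
  fix n assume "\<exists>A\<in>sets (M n). 1 - \<delta> \<le> measure (M n) A \<and> (\<forall>\<omega>\<in>A. P n \<omega>)"
  then obtain A where "A \<in> sets (M n)" "1 - \<delta> \<le> measure (M n) A" "\<forall>\<omega>\<in>A. P n \<omega>" by blast
  then show "\<exists>A\<in>sets (M n). 1 - \<delta>' \<le> measure (M n) A \<and> (\<forall>\<omega>\<in>A. Q n \<omega>)"
    using assms(2,3) by (intro bexI[of _ A]) auto
qed

lemma eventually_whp_conj:
  assumes "\<And>n. prob_space (M n)" "eventually_whp M \<delta> P" "eventually_whp M \<delta>' Q"
  shows "eventually_whp M (\<delta> + \<delta>') (\<lambda>n \<omega>. P n \<omega> \<and> Q n \<omega>)"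
  using assms(2,3) unfolding eventually_whp_def
proof eventually_elim
  case (elim n)
  then obtain A B where A: "A \<in> sets (M n)" "1 - \<delta> \<le> measure (M n) A" "\<forall>\<omega>\<in>A. P n \<omega>"
    and B: "B \<in> sets (M n)" "1 - \<delta>' \<le> measure (M n) B" "\<forall>\<omega>\<in>B. Q n \<omega>" by blast
  interpret prob_space "M n" by fact
  have "measure (M n) (A \<union> B) = measure (M n) A + measure (M n) B - measure (M n) (A \<inter> B)"
    using A B by (intro measure_Un3) (auto simp: fmeasurable_eq_sets)
  moreover have "measure (M n) (A \<union> B) \<le> 1" by simp
  ultimately show ?case using A B by (intro bexI[of _ "A \<inter> B"]) auto
qed

lemma eventually_whp_sections:
  fixes \<gamma> :: real
  assumes "\<And>n. prob_space (M n)" "\<And>n. finite (I n)" "\<And>n. I n \<noteq> {}" "0 < \<gamma>"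
    and "eventually_whp (\<lambda>n. M n \<Otimes>\<^sub>M measure_pmf (pmf_of_set (I n))) (\<delta> * \<gamma>) Q"
  shows "eventually_whp M \<delta> (\<lambda>n Z. card {i\<in>I n. \<not> Q n (Z, i)} \<le> \<gamma> * card (I n))"
  using assms(5) unfolding eventually_whp_def
proof eventually_elim
  case (elim n)
  then obtain A where A: "A \<in> sets (M n \<Otimes>\<^sub>M measure_pmf (pmf_of_set (I n)))"
    "1 - \<delta> * \<gamma> \<le> measure (M n \<Otimes>\<^sub>M measure_pmf (pmf_of_set (I n))) A" "\<forall>\<omega>\<in>A. Q n \<omega>" by blast
  obtain B where B: "B \<in> sets (M n)" "1 - \<delta> \<le> measure (M n) B"
    "\<forall>Z\<in>B. card {i\<in>I n. (Z, i) \<notin> A} \<le> \<gamma> * card (I n)"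
    using Markov_uniform_sections[OF assms(1-4) A(1,2)] assms(4) by auto
  have fewer: "real (card {i\<in>I n. \<not> Q n (Z, i)}) \<le> card {i\<in>I n. (Z, i) \<notin> A}" for Z
    using A(3) assms(2) by (intro of_nat_mono card_mono) auto
  show ?case using B by (intro bexI[of _ B]) (auto intro: order_trans[OF fewer])
qed

lemma (in prob_space) prob_sandwich:
  fixes g :: "'a \<Rightarrow> real"
  assumes [measurable]: "S \<in> events" "A \<in> events" "g \<in> borel_measurable M"
    and "1 - \<delta> \<le> prob A"
    and upper: "\<And>\<omega>. \<omega> \<in> A \<Longrightarrow> \<omega> \<in> S \<Longrightarrow> a < g \<omega>"
    and lower: "\<And>\<omega>. \<omega> \<in> A \<Longrightarrow> \<omega> \<in> space M \<Longrightarrow> b < g \<omega> \<Longrightarrow> \<omega> \<in> S"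
  shows "prob S \<le> 1 - prob {\<omega>\<in>space M. g \<omega> \<le> a} + \<delta>"
    and "1 - prob {\<omega>\<in>space M. g \<omega> \<le> b} - \<delta> \<le> prob S"
proof -
  have gt: "prob {\<omega>\<in>space M. c < g \<omega>} = 1 - prob {\<omega>\<in>space M. g \<omega> \<le> c}" for c
  proof -
    have "{\<omega>\<in>space M. c < g \<omega>} = space M - {\<omega>\<in>space M. g \<omega> \<le> c}" by auto
    then show ?thesis by (simp add: prob_compl)
  qed
  have not_A: "prob (space M - A) \<le> \<delta>" using prob_compl[OF assms(2)] assms(4) by simp
  have "prob S \<le> prob ((space M - A) \<union> {\<omega>\<in>space M. a < g \<omega>})"
    using upper sets.sets_into_space[OF assms(1)] by (intro finite_measure_mono) auto
  also have "\<dots> \<le> prob (space M - A) + prob {\<omega>\<in>space M. a < g \<omega>}"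
    by (rule measure_Un_le) measurable
  finally show "prob S \<le> 1 - prob {\<omega>\<in>space M. g \<omega> \<le> a} + \<delta>"
    using gt[of a] not_A by linarith
  have "prob {\<omega>\<in>space M. b < g \<omega>} \<le> prob ((space M - A) \<union> S)"
    using lower by (intro finite_measure_mono) auto
  also have "\<dots> \<le> prob (space M - A) + prob S"
    by (rule measure_Un_le) measurable
  finally show "1 - prob {\<omega>\<in>space M. g \<omega> \<le> b} - \<delta> \<le> prob S"
    using gt[of b] not_A by linarith
qed

section \<open>Asymptotic size\<close>

locale prepivoted_permutation_test =
  fixes M :: "nat \<Rightarrow> (nat \<Rightarrow> 'a::topological_space) measure"
    and T :: "nat \<Rightarrow> (nat \<Rightarrow> 'a) \<Rightarrow> real"
    and F :: "nat \<Rightarrow> (nat \<Rightarrow> 'a) \<Rightarrow> real \<Rightarrow> real"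
    and R_T H_T :: "real \<Rightarrow> real"
    and \<alpha> :: real
  assumes prob_space_M: "\<And>n. prob_space (M n)"
    and sets_M: "\<And>n. sets (M n) = sets (PiM {..<n} (\<lambda>_. borel))"
    and T_meas: "\<And>n. T n \<in> borel_measurable (PiM {..<n} (\<lambda>_. borel))"
    and F_meas: "\<And>n. (\<lambda>(Z, x). F n Z x) \<in> borel_measurable (PiM {..<n} (\<lambda>_. borel) \<Otimes>\<^sub>M borel)"
    and R_T_cdf: "cont_strict_cdf R_T"
    and H_T_cdf: "cont_strict_cdf H_T"
    and H_T_lim: "\<And>x. (\<lambda>n. measure (M n) {Z\<in>space (M n). T n Z \<le> x}) \<longlonglongrightarrow> H_T x"
    and R_T_lim: "\<And>x. conv_in_prob M (\<lambda>n Z. R_Tn T n Z x) (R_T x)"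
    and F_H: "sup_conv0_in_prob M (\<lambda>n Z x. F n Z x - measure (M n) {Z\<in>space (M n). T n Z \<le> x})"
    and F_R: "sup_conv0_in_prob (\<lambda>n. M n \<Otimes>\<^sub>M measure_pmf (pmf_of_set (perms n)))
        (\<lambda>n \<omega> x. F n (fst \<omega> \<circ> snd \<omega>) x - R_Tn T n (fst \<omega>) x)"
    and alpha: "0 < \<alpha>" "\<alpha> < 1"
begin

abbreviation H :: "nat \<Rightarrow> real \<Rightarrow> real" where
  "H n x \<equiv> measure (M n) {Z\<in>space (M n). T n Z \<le> x}"

lemma measurable_T [measurable]: "T n \<in> borel_measurable (M n)"
  using T_meas measurable_cong_sets[OF sets_M refl] by blast

lemma measurable_phi_Fn [measurable]: "phi_Fn F T \<alpha> n \<in> borel_measurable (M n)"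
  using borel_measurable_phi_Fn[where T=T and F=F and n=n, OF T_meas F_meas alpha]
    measurable_cong_sets[OF sets_M refl] by blast

lemma mono_H: "mono (H n)"
proof (rule monoI)
  interpret prob_space "M n" by (rule prob_space_M)
  show "H n x \<le> H n y" if "x \<le> y" for x y
    using that by (intro finite_measure_mono) auto
qed

lemma integral_phi_Fn:
  "integral\<^sup>L (M n) (phi_Fn F T \<alpha> n) = measure (M n) {Z\<in>space (M n). phi_Fn F T \<alpha> n Z = 1}"
proof -
  interpret prob_space "M n" by (rule prob_space_M)
  have "integral\<^sup>L (M n) (phi_Fn F T \<alpha> n)
      = integral\<^sup>L (M n) (indicator {Z\<in>space (M n). phi_Fn F T \<alpha> n Z = 1})"
    by (rule Bochner_Integration.integral_cong) (auto simp: phi_Fn_def indicator_def)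
  then show ?thesis by simp
qed

lemma eventually_whp_good_sample:
  fixes \<epsilon> :: real
  assumes "0 < \<epsilon>"
  shows "eventually_whp M (4 * \<epsilon>) (\<lambda>n Z. (\<forall>x. \<bar>F n Z x - H n x\<bar> \<le> \<epsilon>) \<and>
    \<bar>R_Tn T n Z y - R_T y\<bar> \<le> \<epsilon> \<and> \<bar>R_Tn T n Z y' - R_T y'\<bar> \<le> \<epsilon> \<and>
    card {\<pi>\<in>perms n. \<exists>x. \<epsilon> < \<bar>F n (Z \<circ> \<pi>) x - R_Tn T n Z x\<bar>} \<le> \<epsilon> * fact n)"
proof -
  have "eventually_whp (\<lambda>n. M n \<Otimes>\<^sub>M measure_pmf (pmf_of_set (perms n))) (\<epsilon> * \<epsilon>)
      (\<lambda>n \<omega>. \<forall>x. \<bar>F n (fst \<omega> \<circ> snd \<omega>) x - R_Tn T n (fst \<omega>) x\<bar> \<le> \<epsilon>)"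
    using sup_conv0_in_prob_whp[OF F_R assms mult_pos_pos[OF assms assms]] by simp
  from eventually_whp_sections[OF prob_space_M finite_perms perms_nonempty assms this]
  have misfit: "eventually_whp M \<epsilon>
      (\<lambda>n Z. card {\<pi>\<in>perms n. \<exists>x. \<epsilon> < \<bar>F n (Z \<circ> \<pi>) x - R_Tn T n Z x\<bar>} \<le> \<epsilon> * fact n)"
    by (rule eventually_whp_mono) (simp_all add: not_le card_perms)
  have fit_H: "eventually_whp M \<epsilon> (\<lambda>n Z. \<forall>x. \<bar>F n Z x - H n x\<bar> \<le> \<epsilon>)"
    using sup_conv0_in_prob_whp[OF F_H assms assms] .
  have fit_R: "eventually_whp M \<epsilon> (\<lambda>n Z. \<bar>R_Tn T n Z x - R_T x\<bar> \<le> \<epsilon>)" for x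
    using conv_in_prob_whp[OF R_T_lim assms assms] .
  show ?thesis
    using eventually_whp_conj[OF prob_space_M fit_H eventually_whp_conj[OF prob_space_M fit_R
        eventually_whp_conj[OF prob_space_M fit_R misfit]]]
    by (rule eventually_whp_mono) auto
qed

lemma eventually_size_close:
  fixes \<epsilon> :: real
  assumes "0 < \<epsilon>" "8 * \<epsilon> \<le> \<alpha>" "8 * \<epsilon> \<le> 1 - \<alpha>"
  shows "\<forall>\<^sub>F n in sequentially. \<bar>integral\<^sup>L (M n) (phi_Fn F T \<alpha> n) - \<alpha>\<bar> < 12 * \<epsilon>"
proof -
  obtain y\<^sub>1 where y\<^sub>1: "R_T y\<^sub>1 = 1 - \<alpha> - 3 * \<epsilon>"
    using cont_strict_cdf_attains[OF R_T_cdf, of "1 - \<alpha> - 3 * \<epsilon>"] assms by auto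
  obtain y\<^sub>3 where y\<^sub>3: "R_T y\<^sub>3 = 1 - \<alpha> + 2 * \<epsilon>"
    using cont_strict_cdf_attains[OF R_T_cdf, of "1 - \<alpha> + 2 * \<epsilon>"] assms by auto
  obtain y\<^sub>2 where y\<^sub>2: "H_T y\<^sub>2 = 1 - \<alpha> - 7 * \<epsilon>"
    using cont_strict_cdf_attains[OF H_T_cdf, of "1 - \<alpha> - 7 * \<epsilon>"] assms by auto
  obtain y\<^sub>4 where y\<^sub>4: "H_T y\<^sub>4 = 1 - \<alpha> + 6 * \<epsilon>"
    using cont_strict_cdf_attains[OF H_T_cdf, of "1 - \<alpha> + 6 * \<epsilon>"] assms by auto
  have H_close: "\<forall>\<^sub>F n in sequentially. \<bar>H n y - H_T y\<bar> < \<epsilon>" for y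
    using tendstoD[OF H_T_lim assms(1)] by (simp add: dist_real_def)
  show ?thesis
    using eventually_whp_good_sample[OF assms(1), of y\<^sub>1 y\<^sub>3, unfolded eventually_whp_def]
      H_close[of y\<^sub>2] H_close[of y\<^sub>4]
  proof eventually_elim
    case (elim n)
    interpret prob_space "M n" by (rule prob_space_M)
    obtain A where A: "A \<in> events" "1 - 4 * \<epsilon> \<le> prob A"
      and good: "\<And>Z. Z \<in> A \<Longrightarrow> (\<forall>x. \<bar>F n Z x - H n x\<bar> \<le> \<epsilon>) \<and>
        \<bar>R_Tn T n Z y\<^sub>1 - R_T y\<^sub>1\<bar> \<le> \<epsilon> \<and> \<bar>R_Tn T n Z y\<^sub>3 - R_T y\<^sub>3\<bar> \<le> \<epsilon> \<and>
        card {\<pi>\<in>perms n. \<exists>x. \<epsilon> < \<bar>F n (Z \<circ> \<pi>) x - R_Tn T n Z x\<bar>} \<le> \<epsilon> * fact n"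
      using elim(1) by blast
    have "H n y\<^sub>2 < 1 - \<alpha> - 6 * \<epsilon>" "1 - \<alpha> + 5 * \<epsilon> < H n y\<^sub>4"
      using elim(2,3) y\<^sub>2 y\<^sub>4 by auto
    then have decides: "(phi_Fn F T \<alpha> n Z = 1 \<longrightarrow> y\<^sub>2 < T n Z) \<and> (y\<^sub>4 < T n Z \<longrightarrow> phi_Fn F T \<alpha> n Z = 1)"
      if "Z \<in> A" for Z
      using phi_Fn_on_good_sample[where F=F and T=T and Z=Z and n=n, OF alpha assms(1) mono_H]
        good[OF that] y\<^sub>1 y\<^sub>3 by auto
    have "{Z\<in>space (M n). phi_Fn F T \<alpha> n Z = 1} \<in> events" by measurable
    from prob_sandwich[OF this A(1) measurable_T A(2)] decides
    have "prob {Z\<in>space (M n). phi_Fn F T \<alpha> n Z = 1} \<le> 1 - H n y\<^sub>2 + 4 * \<epsilon>"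
      and "1 - H n y\<^sub>4 - 4 * \<epsilon> \<le> prob {Z\<in>space (M n). phi_Fn F T \<alpha> n Z = 1}"
      by blast+
    then show ?case using elim(2,3) y\<^sub>2 y\<^sub>4 integral_phi_Fn[of n] by auto
  qed
qed

theorem size_tendsto: "(\<lambda>n. integral\<^sup>L (M n) (phi_Fn F T \<alpha> n)) \<longlonglongrightarrow> \<alpha>"
proof (rule tendstoI)
  fix e :: real assume "0 < e"
  define \<epsilon> where "\<epsilon> = min (e / 12) (min \<alpha> (1 - \<alpha>) / 8)"
  have "0 < \<epsilon>" "8 * \<epsilon> \<le> \<alpha>" "8 * \<epsilon> \<le> 1 - \<alpha>" "12 * \<epsilon> \<le> e"
    using alpha \<open>0 < e\<close> by (auto simp: \<epsilon>_def min_def)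
  from eventually_size_close[OF this(1-3)]
  show "\<forall>\<^sub>F n in sequentially. dist (integral\<^sup>L (M n) (phi_Fn F T \<alpha> n)) \<alpha> < e"
    by (rule eventually_mono) (use \<open>12 * \<epsilon> \<le> e\<close> in \<open>simp add: dist_real_def\<close>)
qed

end

lemma grp_less:
  assumes "(\<Sum>i<k. nn n i) = n" "j < n"
  shows "grp nn n j < k"
proof -
  have "0 < k" using assms by (cases k) auto
  then have "j < (\<Sum>l<Suc (k - 1). nn n l)" using assms by simp
  then have "grp nn n j \<le> k - 1" unfolding grp_def by (rule Least_le)
  then show ?thesis using \<open>0 < k\<close> by simp
qed

lemma
  assumes "(\<Sum>i<k. nn n i) = n" "\<And>i. i < k \<Longrightarrow> prob_space (P i) \<and> sets (P i) = sets borel"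
  shows prob_space_data_law: "prob_space (data_law P nn n)"
    and sets_data_law: "sets (data_law P nn n) = sets (PiM {..<n} (\<lambda>_. borel))"
  unfolding data_law_def using assms grp_less[where nn=nn and n=n, OF assms(1)]
  by (auto intro!: prob_space_PiM sets_PiM_cong)

theorem mainTheorem3:
  fixes k :: nat
    and nn :: "nat \<Rightarrow> nat \<Rightarrow> nat"
    and p :: "nat \<Rightarrow> real"
    and \<theta> :: "(real ^ 'd) measure \<Rightarrow> real ^ 'e"
    and T :: "nat \<Rightarrow> (nat \<Rightarrow> real ^ 'd) \<Rightarrow> real"
    and F :: "nat \<Rightarrow> (nat \<Rightarrow> real ^ 'd) \<Rightarrow> real \<Rightarrow> real"
    and \<A> :: "(nat \<Rightarrow> (real ^ 'd) measure) set"
    and R_T H_T :: "(nat \<Rightarrow> (real ^ 'd) measure) \<Rightarrow> real \<Rightarrow> real"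
    and \<alpha> :: real
  assumes sizes: "\<And>n. (\<Sum>i<k. nn n i) = n"
    and props: "\<And>i. i < k \<Longrightarrow> (\<lambda>n. real (nn n i) / real n) \<longlonglongrightarrow> p i"
    and props_pos: "\<And>i. i < k \<Longrightarrow> 0 < p i \<and> p i < 1"
    and T_meas: "\<And>n. T n \<in> borel_measurable (PiM {..<n} (\<lambda>_. borel))"
    and F_meas: "\<And>n. (\<lambda>(Z, x). F n Z x) \<in> borel_measurable (PiM {..<n} (\<lambda>_. borel) \<Otimes>\<^sub>M borel)"
    and distrs: "\<And>P i. P \<in> \<A> \<Longrightarrow> i < k \<Longrightarrow> prob_space (P i) \<and> sets (P i) = sets borel"
    and null: "\<And>P i j. P \<in> \<A> \<Longrightarrow> i < k \<Longrightarrow> j < k \<Longrightarrow> \<theta> (P i) = \<theta> (P j)"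
    and R_T_cdf: "\<And>P. P \<in> \<A> \<Longrightarrow> cont_strict_cdf (R_T P)"
    and H_T_cdf: "\<And>P. P \<in> \<A> \<Longrightarrow> cont_strict_cdf (H_T P)"
    and H_T_lim: "\<And>P x. P \<in> \<A> \<Longrightarrow> (\<lambda>n. H_Tn P nn T n x) \<longlonglongrightarrow> H_T P x"
    and R_T_lim: "\<And>P x. P \<in> \<A> \<Longrightarrow>
        conv_in_prob (\<lambda>n. data_law P nn n) (\<lambda>n Z. R_Tn T n Z x) (R_T P x)"
    and F_H: "\<And>P. P \<in> \<A> \<Longrightarrow>
        sup_conv0_in_prob (\<lambda>n. data_law P nn n) (\<lambda>n Z x. F n Z x - H_Tn P nn T n x)"
    and F_R: "\<And>P. P \<in> \<A> \<Longrightarrow>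
        sup_conv0_in_prob (\<lambda>n. data_perm_law P nn n)
          (\<lambda>n \<omega> x. F n (fst \<omega> \<circ> snd \<omega>) x - R_Tn T n (fst \<omega>) x)"
    and alpha: "0 < \<alpha>" "\<alpha> < 1"
  shows "\<forall>P\<in>\<A>. (\<lambda>n. integral\<^sup>L (data_law P nn n) (phi_Fn F T \<alpha> n)) \<longlonglongrightarrow> \<alpha>"
proof
  fix P assume P: "P \<in> \<A>"
  interpret prepivoted_permutation_test "\<lambda>n. data_law P nn n" T F "R_T P" "H_T P" \<alpha>
    using prob_space_data_law[where nn=nn and P=P, OF sizes distrs[OF P]]
      sets_data_law[where nn=nn and P=P, OF sizes distrs[OF P]]
      T_meas F_meas R_T_cdf[OF P] H_T_cdf[OF P] H_T_lim[OF P] R_T_lim[OF P] F_H[OF P] F_R[OF P]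
      alpha
    by (simp add: prepivoted_permutation_test_def H_Tn_def data_perm_law_def)
  show "(\<lambda>n. integral\<^sup>L (data_law P nn n) (phi_Fn F T \<alpha> n)) \<longlonglongrightarrow> \<alpha>"
    by (rule size_tendsto)
qed

end
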